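(* Let $G=\operatorname{GL}(n,\mathbb R)$. Then the domain $\Lambda\subset\mathfrak n$ is bounded.
   Context: For $G=\operatorname{GL}(n,\mathbb R)$ take $K=\operatorname{O}(n)$, $G_\mathbb{C}=\operatorname{GL}(n,\mathbb C)$, $K_\mathbb{C}=\operatorname{O}(n,\mathbb C)$, $\mathfrak a$ the real diagonal matrices, $A$ the positive diagonal matrices, $\mathfrak n$ the strictly upper triangular real matrices, $N=\exp\mathfrak n$, $\overline N$ the lower triangular unipotent matrices. The restricted roots are $\alpha_{ij}(Y)=Y_i-Y_j$ ($i\ne j$) for $Y=\operatorname{diag}(Y_1,\dots,Y_n)$. Let $\Omega=\{Y\in\mathfrak a:|Y_i-Y_j|<\pi/2\ \forall i\neq j\}$ and the crown $\Xi=G\exp(i\Omega)K_\mathbb{C}/K_\mathbb{C}\subset G_\mathbb{C}/K_\mathbb{C}$, with base point $z_0=K_\mathbb{C}$. $\Lambda$ is the connected component containing $0$ of $\{Y\in\mathfrak n:\exp(iY)\cdot z_0\in\Xi\}$. *)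

theory Defs
  imports "HOL-Analysis.Analysis"
begin

text \<open>Matrices are indexed by a finite linearly ordered type 'n (so n = CARD('n)).\<close>

primrec mpow :: "'a::comm_ring_1^'n^'n \<Rightarrow> nat \<Rightarrow> 'a^'n^'n" where
  "mpow A 0 = mat 1"
| "mpow A (Suc k) = A ** mpow A k"

definition mexp :: "complex^'n^'n \<Rightarrow> complex^'n^'n" where
  "mexp A = (\<Sum>k. (1 / fact k) *\<^sub>R mpow A k)"

definition cmat :: "real^'n^'n \<Rightarrow> complex^'n^'n" where
  "cmat A = (\<chi> i j. complex_of_real (A $ i $ j))"

definition imat :: "real^'n^'n \<Rightarrow> complex^'n^'n" where
  "imat Y = (\<chi> i j. \<i> * complex_of_real (Y $ i $ j))"

definition GLR :: "(real^'n^'n) set" where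
  "GLR = {g. invertible g}"

definition OC :: "(complex^'n^'n) set" where
  "OC = {k. transpose k ** k = mat 1}"

definition diag_alg :: "(real^'n^'n) set" where
  "diag_alg = {Y. \<forall>i j. i \<noteq> j \<longrightarrow> Y $ i $ j = 0}"

definition Omega :: "(real^'n^'n) set" where
  "Omega = {Y \<in> diag_alg. \<forall>i j. i \<noteq> j \<longrightarrow> \<bar>Y $ i $ i - Y $ j $ j\<bar> < pi / 2}"

definition nilp_alg :: "(real^('n::{finite,linorder})^('n::{finite,linorder})) set" where
  "nilp_alg = {Y. \<forall>i j. j \<le> i \<longrightarrow> Y $ i $ j = 0}"

text \<open>h K_C \<in> \<Xi> = G exp(i\<Omega>) K_C / K_C, i.e. h \<in> G exp(i\<Omega>) K_C.\<close>
definition in_crown :: "complex^'n^'n \<Rightarrow> bool" where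
  "in_crown h \<longleftrightarrow> (\<exists>g\<in>GLR. \<exists>Y\<in>Omega. \<exists>k\<in>OC. h = cmat g ** mexp (imat Y) ** k)"

definition Lambda :: "(real^('n::{finite,linorder})^('n::{finite,linorder})) set" where
  "Lambda = connected_component_set {Y \<in> nilp_alg. in_crown (mexp (imat Y))} 0"

end

theory Submission
  imports Defs
begin

text \<open>
  Every X \<in> \<Lambda> is strictly upper triangular, so
  h = exp(iX) is unipotent upper triangular with h\<inverse> = conj h. If h = g exp(iY) k with Y \<in> \<Omega>
  and k \<in> O(n,C), then h h^T = g exp(2iY) g^T; since the entries of 2Y lie in an interval of
  length < \<pi>, the form v \<mapsto> v^T h h^T v on real vectors takes values in a closed half-plane
  {z. 0 \<le> Re (\<omega> z)}. Writing \<zeta> h = A + iB with \<zeta>^2 = \<omega>, this says |v^T B| \<le> |v^T A|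
  for all real v. Hence T = A\<inverse> B has rows of length at most 1, and conj h h = 1 becomes
  (1 - iT) (\<zeta> h)^2 = 1 + iT. Solving this triangular system bounds the entries of
  h^2 = exp(2iX) by a constant depending only on n, and an induction on the size of the window
  {i..j} bounds X$i$j in terms of the entries of exp(2iX) and of X inside that window.
\<close>

section \<open>Triangular matrices\<close>

definition strict_upper_triangular ::
    "'a::zero^'n::{finite,linorder}^'n::{finite,linorder} \<Rightarrow> bool" where
  "strict_upper_triangular A \<longleftrightarrow> (\<forall>i j. j \<le> i \<longrightarrow> A$i$j = 0)"

definition upper_triangular ::
    "'a::zero^'n::{finite,linorder}^'n::{finite,linorder} \<Rightarrow> bool" where
  "upper_triangular A \<longleftrightarrow> (\<forall>i j. j < i \<longrightarrow> A$i$j = 0)"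

lemma strict_upper_imp_upper_triangular:
  fixes A :: "'a::zero^'n::{finite,linorder}^'n::{finite,linorder}"
  shows "strict_upper_triangular A \<Longrightarrow> upper_triangular A"
  by (simp add: strict_upper_triangular_def upper_triangular_def)

lemma matrix_diff_ldistrib: "(A::'a::ring_1^'m^'k) ** (B - C) = A ** B - A ** C"
  by (simp add: matrix_matrix_mult_def vec_eq_iff sum_subtractf algebra_simps)

lemma matrix_sum_rmult:
  fixes M :: "'i \<Rightarrow> 'a::semiring_1^'m^'k" and B :: "'a^'p^'m"
  shows "(\<Sum>k\<in>K. M k) ** B = (\<Sum>k\<in>K. M k ** B)"
proof -
  have "((\<Sum>k\<in>K. M k) ** B) $ i $ j = (\<Sum>k\<in>K. \<Sum>l\<in>UNIV. M k $ i $ l * B $ l $ j)" for i j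
    by (simp add: matrix_matrix_mult_def sum_distrib_right sum.swap[of _ UNIV])
  then show ?thesis
    by (simp add: vec_eq_iff matrix_matrix_mult_def)
qed

lemma mpow_add: "mpow R (a + b) = mpow R a ** mpow R b"
  by (induction a) (simp_all add: matrix_mul_assoc)

lemma mpow_Suc_right: "mpow R (Suc k) = mpow R k ** R"
  using mpow_add[of R k 1] by simp

lemma upper_triangular_mult:
  fixes A B :: "'a::comm_ring_1^'n::{finite,linorder}^'n::{finite,linorder}"
  assumes "upper_triangular A" "upper_triangular B"
  shows "upper_triangular (A ** B)"
proof -
  have "A$i$l * B$l$j = 0" if "j < i" for i j l
    using assms that by (cases "l < i") (auto simp: upper_triangular_def)
  then show ?thesis
    by (simp add: upper_triangular_def matrix_matrix_mult_def)
qed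

lemma upper_triangular_sum:
  fixes M :: "'i \<Rightarrow> 'a::comm_monoid_add^'n::{finite,linorder}^'n::{finite,linorder}"
  shows "(\<And>k. k \<in> K \<Longrightarrow> upper_triangular (M k)) \<Longrightarrow> upper_triangular (\<Sum>k\<in>K. M k)"
  by (simp add: upper_triangular_def)

lemma upper_triangular_mpow:
  "upper_triangular R \<Longrightarrow> upper_triangular (mpow R k)"
  by (induction k) (auto simp: upper_triangular_mult, simp add: upper_triangular_def mat_def)

text \<open>A nonzero entry of R^k is reached by a path of k strictly increasing steps from i to j.\<close>
lemma mpow_strict_upper_nonzero:
  fixes R :: "'a::comm_ring_1^'n::{finite,linorder}^'n::{finite,linorder}"
  assumes R: "strict_upper_triangular R" and "mpow R k $ i $ j \<noteq> 0"
  shows "i \<le> j \<and> k \<le> card {i..<j}"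
  using assms(2)
proof (induction k arbitrary: i)
  case 0
  then show ?case by (simp add: mat_def split: if_splits)
next
  case (Suc k)
  then have "(\<Sum>l\<in>UNIV. R$i$l * mpow R k $ l $ j) \<noteq> 0"
    by (simp add: matrix_matrix_mult_def)
  then obtain l where l: "R$i$l \<noteq> 0" "mpow R k $ l $ j \<noteq> 0"
    by (metis (no_types, lifting) mult_zero_left mult_zero_right sum.neutral)
  have "i < l"
    using R l(1) by (meson not_le strict_upper_triangular_def)
  moreover have "l \<le> j" "k \<le> card {l..<j}"
    using Suc.IH[OF l(2)] by auto
  moreover have "Suc (card {l..<j}) \<le> card {i..<j}"
  proof -
    have "card (insert i {l..<j}) \<le> card {i..<j}"
      using \<open>i < l\<close> \<open>l \<le> j\<close> by (intro card_mono) auto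
    then show ?thesis
      using \<open>i < l\<close> by (subst (asm) card_insert_disjoint) auto
  qed
  ultimately show ?case
    by simp
qed

lemma mpow_strict_upper_eq_0:
  fixes R :: "'a::comm_ring_1^'n::{finite,linorder}^'n::{finite,linorder}"
  assumes "strict_upper_triangular R" "CARD('n) \<le> k"
  shows "mpow R k = 0"
proof -
  have "mpow R k $ i $ j = 0" for i j
  proof (rule ccontr)
    assume "mpow R k $ i $ j \<noteq> 0"
    then have "k \<le> card {i..<j}"
      using mpow_strict_upper_nonzero[OF assms(1)] by blast
    moreover have "card {i..<j} < CARD('n)"
      by (rule psubset_card_mono) auto
    ultimately show False
      using assms(2) by simp
  qed
  then show ?thesis
    by (simp add: vec_eq_iff)
qed

lemma strict_upper_triangular_mpow:
  fixes R :: "'a::comm_ring_1^'n::{finite,linorder}^'n::{finite,linorder}"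
  assumes "strict_upper_triangular R" "0 < k"
  shows "strict_upper_triangular (mpow R k)"
  using mpow_strict_upper_nonzero[OF assms(1), of k] assms(2)
  by (fastforce simp: strict_upper_triangular_def)

lemma strict_upper_neumann:
  fixes N :: "'a::comm_ring_1^'n::{finite,linorder}^'n::{finite,linorder}"
  assumes "strict_upper_triangular N"
  shows "(\<Sum>k<CARD('n). mpow N k) ** (mat 1 - N) = mat 1"
proof -
  have "(\<Sum>k<CARD('n). mpow N k) ** (mat 1 - N) = (\<Sum>k<CARD('n). mpow N k - mpow N (Suc k))"
    by (simp add: matrix_sum_rmult matrix_diff_ldistrib sum_subtractf mpow_Suc_right[symmetric]
        del: mpow.simps)
  also have "\<dots> = mat 1"
    by (subst sum_lessThan_telescope') (simp add: mpow_strict_upper_eq_0[OF assms])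
  finally show ?thesis .
qed

lemma upper_triangular_left_inverse:
  fixes A :: "'a::field^'n::{finite,linorder}^'n::{finite,linorder}"
  assumes A: "upper_triangular A" and A_diag: "\<And>i. A$i$i = c" and "c \<noteq> 0"
  obtains P where "P ** A = mat 1" "upper_triangular P"
proof
  define N where "N = mat 1 - (\<chi> i j. A$i$j / c)"
  define S where "S = (\<Sum>k<CARD('n). mpow N k)"
  have N: "strict_upper_triangular N"
    using A A_diag \<open>c \<noteq> 0\<close>
    by (simp add: strict_upper_triangular_def upper_triangular_def N_def mat_def)
  have "(\<chi> i j. S$i$j / c) ** A = S ** (mat 1 - N)"
    by (simp add: N_def matrix_matrix_mult_def vec_eq_iff sum_divide_distrib)
  then show "(\<chi> i j. S$i$j / c) ** A = mat 1"
    using strict_upper_neumann[OF N] by (simp add: S_def)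
  have "upper_triangular S"
    unfolding S_def
    by (intro upper_triangular_sum upper_triangular_mpow strict_upper_imp_upper_triangular N)
  then show "upper_triangular (\<chi> i j. S$i$j / c)"
    by (simp add: upper_triangular_def)
qed

lemma norm_matrix_mult_entry_le:
  fixes A :: "'a::real_normed_field^'m^'k" and B :: "'a^'p^'m" and \<alpha> \<beta> :: real
  assumes "\<And>i j. norm (A$i$j) \<le> \<alpha>" "\<And>i j. norm (B$i$j) \<le> \<beta>"
  shows "norm ((A ** B)$i$j) \<le> real CARD('m) * (\<alpha> * \<beta>)"
proof -
  have "norm ((A ** B)$i$j) \<le> (\<Sum>l\<in>UNIV. norm (A$i$l) * norm (B$l$j))"
    using norm_sum[of "\<lambda>l. A$i$l * B$l$j" UNIV] by (simp add: matrix_matrix_mult_def norm_mult)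
  also have "\<dots> \<le> (\<Sum>l\<in>(UNIV::'m set). \<alpha> * \<beta>)"
    by (intro sum_mono mult_mono') (auto intro: assms)
  finally show ?thesis
    by simp
qed

lemma norm_mpow_entry_le:
  fixes Q :: "'a::real_normed_field^'n^'n"
  assumes "\<And>i j. norm (Q$i$j) \<le> 1"
  shows "norm (mpow Q k $ i $ j) \<le> real CARD('n) ^ k"
proof (induction k arbitrary: i j)
  case 0
  then show ?case by (simp add: mat_def)
next
  case (Suc k)
  then show ?case
    using norm_matrix_mult_entry_le[OF assms Suc.IH] by simp
qed

text \<open>Dividing each row by its diagonal entry turns L into 1 - Q with Q nilpotent, and then
  W = (\<Sum>k. Q^k) (1 - Q) W.\<close>
lemma upper_triangular_solve_bound:
  fixes L W R :: "'a::real_normed_field^'n::{finite,linorder}^'n::{finite,linorder}"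
  assumes L: "upper_triangular L"
    and L_diag: "\<And>i. 1 \<le> norm (L$i$i)"
    and L_off: "\<And>i j. i \<noteq> j \<Longrightarrow> norm (L$i$j) \<le> 1"
    and R: "\<And>i j. norm (R$i$j) \<le> \<rho>" and LW: "L ** W = R"
  shows "norm (W$i$j) \<le> \<rho> * (\<Sum>k<CARD('n). real CARD('n) ^ Suc k)"
proof -
  let ?N = "CARD('n)"
  define Q where "Q = mat 1 - (\<chi> i j. L$i$j / L$i$i)"
  define R' where "R' = (\<chi> i j. R$i$j / L$i$i)"
  have L_nz: "L$i$i \<noteq> 0" for i
    using L_diag[of i] by auto
  have Q: "strict_upper_triangular Q"
    using L L_nz by (simp add: strict_upper_triangular_def upper_triangular_def Q_def mat_def)
  have "(mat 1 - Q) ** W = R'"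
    by (simp add: Q_def R'_def LW[symmetric] matrix_matrix_mult_def vec_eq_iff sum_divide_distrib)
  then have "W = (\<Sum>k<?N. mpow Q k) ** R'"
    using strict_upper_neumann[OF Q] by (metis matrix_mul_assoc matrix_mul_lid)
  then have W: "W$i$j = (\<Sum>k<?N. (mpow Q k ** R')$i$j)"
    by (simp add: matrix_sum_rmult)
  have Q_le: "norm (Q$i$j) \<le> 1" for i j
  proof (cases "i = j")
    case False
    then show ?thesis
      using L_off[of i j] L_diag[of i] by (simp add: Q_def mat_def norm_divide divide_le_eq)
  qed (simp add: Q_def mat_def L_nz)
  have R'_le: "norm (R'$i$j) \<le> \<rho>" for i j
  proof -
    have "norm (R$i$j) / norm (L$i$i) \<le> norm (R$i$j)"
      using L_diag[of i] by (simp add: divide_le_eq mult_le_cancel_left1)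
    then show ?thesis
      using R[of i j] by (simp add: R'_def norm_divide)
  qed
  have "norm (W$i$j) \<le> (\<Sum>k<?N. norm ((mpow Q k ** R')$i$j))"
    unfolding W by (rule norm_sum)
  also have "\<dots> \<le> (\<Sum>k<?N. ?N * (real ?N ^ k * \<rho>))"
    by (intro sum_mono norm_matrix_mult_entry_le norm_mpow_entry_le Q_le R'_le)
  finally show ?thesis
    by (simp add: sum_distrib_left mult_ac)
qed

text \<open>A path of length at least 2 from i to j never uses the corner entry (i, j) itself.\<close>
lemma norm_mpow_entry_window_le:
  fixes R :: "'a::real_normed_field^'n::{finite,linorder}^'n::{finite,linorder}"
  assumes R: "strict_upper_triangular R" and "0 \<le> \<beta>"
    and window: "\<And>a b. i \<le> a \<Longrightarrow> b \<le> j \<Longrightarrow> (a, b) \<noteq> (i, j) \<Longrightarrow> norm (R$a$b) \<le> \<beta>"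
  shows "0 < k \<Longrightarrow> i \<le> a \<Longrightarrow> b \<le> j \<Longrightarrow> (a, b) \<noteq> (i, j) \<or> 2 \<le> k \<Longrightarrow>
    norm (mpow R k $ a $ b) \<le> real CARD('n) ^ (k - 1) * \<beta>^k"
proof (induction k arbitrary: a b)
  case 0
  then show ?case by simp
next
  case (Suc k)
  show ?case
  proof (cases "k = 0")
    case True
    then show ?thesis
      using Suc.prems window by simp
  next
    case False
    have step: "norm (R$a$l * mpow R k $ l $ b) \<le> \<beta> * (real CARD('n) ^ (k - 1) * \<beta>^k)" for l
    proof (cases "a < l \<and> l < b")
      case True
      have "i < l" "l < j"
        using Suc.prems(2,3) True by (meson order.strict_trans1 order.strict_trans2)+
      then have "norm (R$a$l) \<le> \<beta>"
        using window[OF Suc.prems(2) less_imp_le[OF \<open>l < j\<close>]] by blast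
      moreover have "norm (mpow R k $ l $ b) \<le> real CARD('n) ^ (k - 1) * \<beta>^k"
        using Suc.IH[OF _ less_imp_le[OF \<open>i < l\<close>] Suc.prems(3)] \<open>i < l\<close> False by blast
      ultimately show ?thesis
        by (simp add: norm_mult mult_mono' \<open>0 \<le> \<beta>\<close>)
    next
      case False
      then have "norm (R$a$l * mpow R k $ l $ b) = 0"
        using R strict_upper_triangular_mpow[OF R, of k] \<open>k \<noteq> 0\<close>
        by (auto simp: strict_upper_triangular_def not_less)
      then show ?thesis
        using \<open>0 \<le> \<beta>\<close> by (metis mult_nonneg_nonneg of_nat_0_le_iff zero_le_power)
    qed
    have "norm (mpow R (Suc k) $ a $ b) \<le> (\<Sum>l\<in>UNIV. norm (R$a$l * mpow R k $ l $ b))"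
      by (simp add: matrix_matrix_mult_def norm_sum)
    also have "\<dots> \<le> (\<Sum>l\<in>(UNIV::'n set). \<beta> * (real CARD('n) ^ (k - 1) * \<beta>^k))"
      by (intro sum_mono step)
    finally show ?thesis
      using False by (cases k) (simp_all add: mult_ac)
  qed
qed

section \<open>Exponentials of nilpotent matrices\<close>

text \<open>exp (c R) for strictly upper triangular R, whose exponential series stops after CARD('n)
  terms; for other R it is only a truncation of the series.\<close>
definition nil_exp :: "'a::field_char_0 \<Rightarrow> 'a^'n::{finite,linorder}^'n::{finite,linorder} \<Rightarrow>
    'a^'n::{finite,linorder}^'n::{finite,linorder}" where
  "nil_exp c R = (\<chi> i j. \<Sum>k<CARD('n). c^k / fact k * mpow R k $ i $ j)"

lemma power_add_div_fact:
  fixes a b :: "'a::field_char_0"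
  shows "(a + b)^s / fact s = (\<Sum>k\<le>s. a^k / fact k * (b^(s-k) / fact (s-k)))"
proof -
  have "(a + b)^s / fact s = (\<Sum>k\<le>s. of_nat (s choose k) * a^k * b^(s-k) / fact s)"
    by (simp add: binomial_ring sum_divide_distrib)
  also have "\<dots> = (\<Sum>k\<le>s. a^k / fact k * (b^(s-k) / fact (s-k)))"
    by (intro sum.cong refl) (simp add: binomial_fact field_simps)
  finally show ?thesis .
qed

lemma nil_exp_add:
  fixes R :: "'a::field_char_0^'n::{finite,linorder}^'n::{finite,linorder}"
  assumes R: "strict_upper_triangular R"
  shows "nil_exp a R ** nil_exp b R = nil_exp (a + b) R"
proof -
  let ?N = "CARD('n)"
  have "(nil_exp a R ** nil_exp b R) $ i $ j = nil_exp (a + b) R $ i $ j" for i j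
  proof -
    define F where "F s = mpow R s $ i $ j" for s
    define c where "c k m = a^k / fact k * (b^m / fact m)" for k m
    have F_eq_0: "F s = 0" if "?N \<le> s" for s
      using mpow_strict_upper_eq_0[OF R that] by (simp add: F_def)
    have "(nil_exp a R ** nil_exp b R) $ i $ j
        = (\<Sum>l\<in>UNIV. \<Sum>k<?N. \<Sum>m<?N. c k m * (mpow R k $ i $ l * mpow R m $ l $ j))"
      by (simp add: matrix_matrix_mult_def nil_exp_def c_def sum_product mult_ac)
    also have "\<dots> = (\<Sum>k<?N. \<Sum>m<?N. c k m * (\<Sum>l\<in>UNIV. mpow R k $ i $ l * mpow R m $ l $ j))"
      by (subst sum.swap, intro sum.cong refl, subst sum.swap) (simp add: sum_distrib_left)
    also have "\<dots> = (\<Sum>(k, m)\<in>{..<?N} \<times> {..<?N}. c k m * F (k + m))"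
      by (simp add: F_def mpow_add matrix_matrix_mult_def sum.cartesian_product)
    also have "\<dots> = (\<Sum>(k, m)\<in>{(k, m). k + m < ?N}. c k m * F (k + m))"
      by (rule sum.mono_neutral_right) (auto, metis F_eq_0 not_less)
    also have "\<dots> = (\<Sum>s<?N. \<Sum>k\<le>s. c k (s - k) * F s)"
      by (subst sum.triangle_reindex) simp
    also have "\<dots> = (\<Sum>s<?N. (a + b)^s / fact s * F s)"
      by (simp add: c_def power_add_div_fact sum_distrib_right)
    finally show ?thesis
      by (simp add: nil_exp_def F_def)
  qed
  then show ?thesis
    by (simp add: vec_eq_iff)
qed

lemma nil_exp_0:
  fixes R :: "'a::field_char_0^'n::{finite,linorder}^'n::{finite,linorder}"
  shows "nil_exp 0 R = mat 1"
proof -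
  have "(\<Sum>k<CARD('n). 0^k / fact k * mpow R k $ i $ j) = mpow R 0 $ i $ j" for i j :: 'n
    by (subst sum.mono_neutral_right[where S = "{0}"]) auto
  then show ?thesis
    by (simp add: nil_exp_def vec_eq_iff)
qed

lemma nil_exp_lower:
  fixes R :: "'a::field_char_0^'n::{finite,linorder}^'n::{finite,linorder}"
  assumes R: "strict_upper_triangular R" and "j \<le> i"
  shows "nil_exp c R $ i $ j = mat 1 $ i $ j"
proof -
  have "mpow R k $ i $ j = 0" if "0 < k" for k
    using strict_upper_triangular_mpow[OF R that] \<open>j \<le> i\<close> by (simp add: strict_upper_triangular_def)
  then have "(\<Sum>k<CARD('n). c^k / fact k * mpow R k $ i $ j) = mpow R 0 $ i $ j"
    by (subst sum.mono_neutral_right[where S = "{0}"]) auto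
  then show ?thesis
    by (simp add: nil_exp_def)
qed

lemma cmat_mult: "cmat (A ** B) = cmat A ** cmat B"
  by (simp add: cmat_def matrix_matrix_mult_def vec_eq_iff)

lemma mpow_cmat: "mpow (cmat X) k = cmat (mpow X k)"
  by (induction k) (simp_all add: cmat_mult, simp add: cmat_def mat_def vec_eq_iff)

lemma mpow_imat: "mpow (imat X) k = (\<chi> i j. \<i>^k * mpow (cmat X) k $ i $ j)"
proof (induction k)
  case 0
  then show ?case by (simp add: vec_eq_iff)
next
  case (Suc k)
  then show ?case
    by (simp add: vec_eq_iff matrix_matrix_mult_def imat_def cmat_def sum_distrib_left mult_ac)
qed

lemma mexp_imat_strict_upper:
  fixes X :: "real^'n::{finite,linorder}^'n::{finite,linorder}"
  assumes "strict_upper_triangular X"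
  shows "mexp (imat X) = nil_exp \<i> (cmat X)"
proof -
  have "strict_upper_triangular (imat X)"
    using assms by (simp add: strict_upper_triangular_def imat_def)
  then have "mexp (imat X) = (\<Sum>k<CARD('n). (1 / fact k) *\<^sub>R mpow (imat X) k)"
    unfolding mexp_def by (intro suminf_finite) (auto simp: mpow_strict_upper_eq_0)
  then show ?thesis
    by (simp add: vec_eq_iff nil_exp_def mpow_imat) (simp add: scaleR_conv_of_real)
qed

lemma cnj_nil_exp: "cnj (nil_exp c (cmat X) $ i $ j) = nil_exp (cnj c) (cmat X) $ i $ j"
  by (simp add: nil_exp_def mpow_cmat) (simp add: cmat_def)

text \<open>The entry (i, j) of exp (c R) is c R$i$j plus terms of order \<ge> 2, which involve only the
  other entries of R in the window [i, j].\<close>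
lemma norm_corner_entry_le:
  fixes R :: "complex^'n::{finite,linorder}^'n::{finite,linorder}"
  assumes R: "strict_upper_triangular R" and "0 \<le> \<beta>" and "i < j"
    and window: "\<And>a b. i \<le> a \<Longrightarrow> b \<le> j \<Longrightarrow> (a, b) \<noteq> (i, j) \<Longrightarrow> cmod (R$a$b) \<le> \<beta>"
  shows "cmod (c * R$i$j) \<le> cmod (nil_exp c R $ i $ j) + (\<Sum>k<CARD('n). (cmod c * CARD('n) * \<beta>)^k)"
proof -
  let ?N = "CARD('n)"
  define f where "f k = c^k / fact k * mpow R k $ i $ j" for k
  define g where "g k = (if k = 1 then 0 else f k)" for k
  have "1 < ?N"
    using card_mono[of UNIV "{i, j}"] \<open>i < j\<close> by simp
  then have "nil_exp c R $ i $ j = f 1 + (\<Sum>k<?N. g k)"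
    by (simp add: nil_exp_def f_def g_def sum.If_cases Diff_eq sum.remove[of "{..<?N}" 1])
  moreover have "f 1 = c * R$i$j"
    by (simp add: f_def)
  moreover have "cmod (g k) \<le> (cmod c * ?N * \<beta>)^k" for k
  proof (cases "2 \<le> k")
    case True
    have "cmod (f k) = cmod c ^ k * cmod (mpow R k $ i $ j) / fact k"
      by (simp add: f_def norm_mult norm_divide norm_power)
    also have "\<dots> \<le> cmod c ^ k * cmod (mpow R k $ i $ j)"
      by (simp add: divide_le_eq mult_le_cancel_left1 mult_less_0_iff)
    also have "\<dots> \<le> cmod c ^ k * (real ?N ^ (k - 1) * \<beta>^k)"
      using norm_mpow_entry_window_le[OF R \<open>0 \<le> \<beta>\<close> window, where a = i and b = j] True
      by (intro mult_left_mono) auto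
    also have "\<dots> \<le> cmod c ^ k * (real ?N ^ k * \<beta>^k)"
      using \<open>1 < ?N\<close> \<open>0 \<le> \<beta>\<close> by (intro mult_left_mono mult_right_mono power_increasing) auto
    finally show ?thesis
      using True by (simp add: g_def power_mult_distrib)
  next
    case False
    then have "k = 0 \<or> k = 1"
      by auto
    then show ?thesis
      using \<open>i < j\<close> \<open>0 \<le> \<beta>\<close> by (auto simp: g_def f_def mat_def)
  qed
  then have "cmod (\<Sum>k<?N. g k) \<le> (\<Sum>k<?N. (cmod c * ?N * \<beta>)^k)"
    using norm_sum[of g "{..<?N}"] sum_mono[of "{..<?N}" "\<lambda>k. cmod (g k)"] by (meson order.trans)
  ultimately show ?thesis
    using norm_triangle_ineq4[of "nil_exp c R $ i $ j" "\<Sum>k<?N. g k"] by simp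
qed

section \<open>The crown as a half-plane condition\<close>

definition cvec :: "real^'n \<Rightarrow> complex^'n" where
  "cvec v = (\<chi> i. complex_of_real (v$i))"

text \<open>The bilinear square x^T x: for complex vectors it is invariant under O(n,C), not U(n).\<close>
definition sq_sum :: "'a::comm_ring_1^'n \<Rightarrow> 'a" where
  "sq_sum x = (\<Sum>j\<in>UNIV. (x$j)^2)"

lemma sq_sum_orthogonal:
  fixes K :: "'a::comm_ring_1^'n^'n"
  assumes "K ** transpose K = mat 1"
  shows "sq_sum (x v* K) = sq_sum x"
proof -
  have "sq_sum (x v* K) = (\<Sum>j\<in>UNIV. \<Sum>m\<in>UNIV. \<Sum>m'\<in>UNIV. x$m * x$m' * (K$m$j * K$m'$j))"
    by (simp add: sq_sum_def vector_matrix_mult_def power2_eq_square sum_product mult_ac)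
  also have "\<dots> = (\<Sum>m\<in>UNIV. \<Sum>m'\<in>UNIV. \<Sum>j\<in>UNIV. x$m * x$m' * (K$m$j * K$m'$j))"
    by (subst sum.swap) (rule sum.cong[OF refl sum.swap])
  also have "\<dots> = (\<Sum>m\<in>UNIV. \<Sum>m'\<in>UNIV. x$m * x$m' * (K ** transpose K)$m$m')"
    by (simp add: matrix_matrix_mult_def transpose_def sum_distrib_left)
  also have "\<dots> = sq_sum x"
    by (simp add: assms sq_sum_def mat_def power2_eq_square if_distrib cong: if_cong)
  finally show ?thesis .
qed

lemma sq_sum_diag:
  "sq_sum (x v* (\<chi> i j. if i = j then d i else 0)) = (\<Sum>m\<in>UNIV. (x$m)^2 * (d m)^2)"
  by (simp add: sq_sum_def vector_matrix_mult_def if_distrib power_mult_distrib cong: if_cong)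

lemma Re_sq_sum: "Re (sq_sum x) = sq_sum (\<chi> j. Re (x$j)) - sq_sum (\<chi> j. Im (x$j))"
  by (simp add: sq_sum_def power2_eq_square sum_subtractf)

lemma sq_sum_axis: "sq_sum (axis i (1::'a::comm_ring_1)) = 1"
  by (simp add: sq_sum_def axis_def if_distrib if_distribR cong: if_cong)

lemma axis_vector_matrix_mult: "(axis i 1 v* M)$j = M$i$j"
  by (simp add: vector_matrix_mult_def axis_def if_distrib if_distribR cong: if_cong)

lemma cvec_vector_matrix_mult: "cvec v v* cmat g = cvec (v v* g)"
  by (simp add: cvec_def cmat_def vector_matrix_mult_def vec_eq_iff)

lemma mexp_imat_diag:
  fixes Y :: "real^'n^'n"
  assumes "Y \<in> diag_alg"
  shows "mexp (imat Y) = (\<chi> i j. if i = j then exp (\<i> * Y$i$i) else 0)"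
proof -
  have imat_Y: "imat Y = (\<chi> i j. if i = j then \<i> * Y$i$i else 0)"
    using assms by (auto simp: imat_def diag_alg_def vec_eq_iff)
  have mpow_Y: "mpow (imat Y) k = (\<chi> i j. if i = j then (\<i> * Y$i$i)^k else 0)" for k
    by (induction k)
      (auto simp: vec_eq_iff mat_def imat_Y matrix_matrix_mult_def if_distrib if_distribR
        cong: if_cong)
  have "(\<lambda>k. (1 / fact k) *\<^sub>R mpow (imat Y) k) sums (\<chi> i j. if i = j then exp (\<i> * Y$i$i) else 0)"
    unfolding sums_def
  proof (intro vec_tendstoI)
    fix i j :: 'n
    show "(\<lambda>n. (\<Sum>k<n. (1 / fact k) *\<^sub>R mpow (imat Y) k) $ i $ j)
        \<longlonglongrightarrow> (\<chi> i j. if i = j then exp (\<i> * Y$i$i) else 0) $ i $ j"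
      using exp_converges[of "\<i> * Y$i$i"]
      by (cases "i = j") (simp_all add: mpow_Y sums_def inverse_eq_divide)
  qed
  then show ?thesis
    unfolding mexp_def by (rule sums_unique[symmetric])
qed

text \<open>All 2 Y$m$m lie in an interval of length < \<pi>, so one rotation moves them into
  [-\<pi>/2, \<pi>/2].\<close>
lemma Omega_common_direction:
  fixes Y :: "real^'n^'n"
  assumes "Y \<in> Omega"
  obtains \<theta> where "\<And>m. 0 \<le> cos (2 * Y$m$m - \<theta>)"
proof -
  define y where "y m = Y$m$m" for m
  have range: "finite (range y)" "range y \<noteq> {}"
    by auto
  obtain a where a: "y a = Min (range y)"
    using Min_in[OF range] by (metis rangeE)
  obtain b where b: "y b = Max (range y)"
    using Max_in[OF range] by (metis rangeE)
  have "\<bar>y b - y a\<bar> < pi / 2 \<or> a = b"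
    using assms by (auto simp: Omega_def y_def)
  then have "y b - y a \<le> pi / 2"
    using pi_ge_zero abs_ge_self[of "y b - y a"] by fastforce
  moreover have "y a \<le> y m" "y m \<le> y b" for m
    using a b range by simp_all
  ultimately have "0 \<le> cos (2 * y m - (y a + y b))" for m
    by (intro cos_ge_zero) (smt (verit))+
  then show ?thesis
    using that[of "y a + y b"] by (simp add: y_def)
qed

lemma in_crown_half_plane:
  assumes "in_crown h"
  obtains \<omega> where "cmod \<omega> = 1" "\<And>v. 0 \<le> Re (\<omega> * sq_sum (cvec v v* h))"
proof -
  obtain g Y K where Y: "Y \<in> Omega" and K: "K \<in> OC" and h: "h = cmat g ** mexp (imat Y) ** K"
    using assms unfolding in_crown_def by blast
  obtain \<theta> where \<theta>: "\<And>m. 0 \<le> cos (2 * Y$m$m - \<theta>)"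
    using Omega_common_direction[OF Y] by blast
  define \<omega> where "\<omega> = exp (- (\<i> * \<theta>))"
  have "0 \<le> Re (\<omega> * sq_sum (cvec v v* h))" for v
  proof -
    define u where "u = v v* g"
    have KK: "K ** transpose K = mat 1"
      using K by (simp add: OC_def matrix_left_right_inverse)
    have rotate: "\<omega> * exp (\<i> * Y$m$m)^2 = exp (\<i> * of_real (2 * Y$m$m - \<theta>))" for m
      by (simp add: \<omega>_def exp_add[symmetric] power2_eq_square algebra_simps)
    have "\<omega> * sq_sum (cvec v v* h) = \<omega> * (\<Sum>m\<in>UNIV. (cvec u $ m)^2 * exp (\<i> * Y$m$m)^2)"
      using Y KK
      by (simp add: h vector_matrix_mul_assoc[symmetric] sq_sum_orthogonal cvec_vector_matrix_mult
          mexp_imat_diag Omega_def sq_sum_diag u_def)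
    also have "\<dots> = (\<Sum>m\<in>UNIV. of_real ((u$m)^2) * exp (\<i> * of_real (2 * Y$m$m - \<theta>)))"
      unfolding sum_distrib_left rotate[symmetric] by (simp add: cvec_def mult_ac)
    finally have "Re (\<omega> * sq_sum (cvec v v* h)) = (\<Sum>m\<in>UNIV. (u$m)^2 * cos (2 * Y$m$m - \<theta>))"
      by (simp add: Re_exp)
    then show ?thesis
      using \<theta> by (simp add: sum_nonneg)
  qed
  moreover have "cmod \<omega> = 1"
    by (simp add: \<omega>_def)
  ultimately show ?thesis
    using that by blast
qed

section \<open>Bounding exp (2iX)\<close>

lemma Re_csqrt_pos:
  assumes "0 \<le> Re z" "z \<noteq> 0"
  shows "0 < Re (csqrt z)"
proof (rule ccontr)
  assume "\<not> 0 < Re (csqrt z)"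
  then have "Re (csqrt z) = 0"
    using Re_csqrt[of z] by linarith
  then have "Re z = - ((Im (csqrt z))^2)"
    using Re_power2[of "csqrt z"] by simp
  then have "Im (csqrt z) = 0"
    using assms(1) by (smt (verit) zero_le_power2 power_zero_numeral power2_eq_square mult_eq_0_iff)
  then have "csqrt z = 0"
    using \<open>Re (csqrt z) = 0\<close> by (simp add: complex_eq_iff)
  then show False
    using assms(2) by simp
qed

lemma dominated_rows_entry_le:
  fixes A B P :: "real^'n^'n"
  assumes PA: "P ** A = mat 1" and dom: "\<And>v. sq_sum (v v* B) \<le> sq_sum (v v* A)"
  shows "\<bar>(P ** B)$i$j\<bar> \<le> 1"
proof -
  define v where "v = axis i 1 v* P"
  have "((P ** B)$i$j)^2 \<le> sq_sum (axis i 1 v* (P ** B))"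
    unfolding sq_sum_def axis_vector_matrix_mult by (rule member_le_sum) auto
  also have "\<dots> \<le> sq_sum (axis i (1::real))"
    using dom[of v] by (simp add: v_def vector_matrix_mul_assoc PA)
  finally show ?thesis
    by (simp add: sq_sum_axis abs_square_le_1)
qed

text \<open>P sends conj M and M to 1 - iT and 1 + iT, so conj M M = 1 makes M M the Cayley transform
  (1 - iT)\<inverse> (1 + iT).\<close>
lemma Cayley_identity:
  fixes M :: "complex^'n^'n" and P :: "real^'n^'n"
  defines "T \<equiv> P ** (\<chi> i j. Im (M$i$j))"
  assumes conj: "(\<chi> i j. cnj (M$i$j)) ** M = mat 1"
    and PA: "P ** (\<chi> i j. Re (M$i$j)) = mat 1"
  shows "(mat 1 - imat T) ** (M ** M) = mat 1 + imat T"
proof -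
  have PM: "cmat P ** M = mat 1 + imat T"
    and PM': "cmat P ** (\<chi> i j. cnj (M$i$j)) = mat 1 - imat T"
    using arg_cong[OF PA, of cmat]
    by (simp_all add: T_def vec_eq_iff imat_def cmat_def matrix_matrix_mult_def mat_def
        complex_eq_iff sum_negf if_distrib cong: if_cong)
  show ?thesis
    by (metis PM PM' conj matrix_mul_assoc matrix_mul_lid)
qed

definition crown_const :: "nat \<Rightarrow> real" where
  "crown_const N = 2 * (\<Sum>k<N. real N ^ Suc k)"

lemma square_bound_of_domination:
  fixes M :: "complex^'n::{finite,linorder}^'n::{finite,linorder}"
  defines "A \<equiv> \<chi> i j. Re (M$i$j)" and "B \<equiv> \<chi> i j. Im (M$i$j)"
  assumes conj: "(\<chi> i j. cnj (M$i$j)) ** M = mat 1"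
    and M: "upper_triangular M" and M_diag: "\<And>i. M$i$i = \<zeta>" and "0 < Re \<zeta>"
    and dom: "\<And>v. sq_sum (v v* B) \<le> sq_sum (v v* A)"
  shows "cmod ((M ** M)$i$j) \<le> crown_const CARD('n)"
proof -
  have "upper_triangular A" "\<And>i. A$i$i = Re \<zeta>" "upper_triangular B"
    using M M_diag by (simp_all add: A_def B_def upper_triangular_def)
  then obtain P where PA: "P ** A = mat 1" and P: "upper_triangular P"
    using upper_triangular_left_inverse \<open>0 < Re \<zeta>\<close> by (metis less_irrefl)
  define T where "T = P ** B"
  have T: "upper_triangular T"
    using P \<open>upper_triangular B\<close> by (simp add: T_def upper_triangular_mult)
  have T_le: "\<bar>T$i$j\<bar> \<le> 1" for i j
    using dominated_rows_entry_le[OF PA dom] by (simp add: T_def)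
  have Cayley: "(mat 1 - imat T) ** (M ** M) = mat 1 + imat T"
    using Cayley_identity[OF conj] PA by (simp add: A_def B_def T_def)
  show ?thesis
    unfolding crown_const_def
  proof (rule upper_triangular_solve_bound[OF _ _ _ _ Cayley])
    show "upper_triangular (mat 1 - imat T)"
      using T by (simp add: upper_triangular_def imat_def mat_def)
    show "1 \<le> cmod ((mat 1 - imat T)$i$i)" for i
      by (simp add: imat_def mat_def cmod_def)
    show "cmod ((mat 1 - imat T)$i$j) \<le> 1" if "i \<noteq> j" for i j
      using that T_le[of i j] by (simp add: imat_def mat_def norm_mult)
    show "cmod ((mat 1 + imat T)$i$j) \<le> 2" for i j
      using norm_triangle_ineq[of "mat 1 $ i $ j" "imat T $ i $ j"] T_le[of i j]
      by (simp add: imat_def mat_def norm_mult split: if_splits)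
  qed
qed

text \<open>Rotating h by \<zeta> = \<surd>\<omega> turns the half-plane condition into Im (\<zeta> h) being dominated
  by Re (\<zeta> h).\<close>
lemma half_plane_square_bound:
  fixes h :: "complex^'n::{finite,linorder}^'n::{finite,linorder}"
  assumes h: "upper_triangular h" and h_diag: "\<And>i. h$i$i = 1"
    and conj: "(\<chi> i j. cnj (h$i$j)) ** h = mat 1"
    and "cmod \<omega> = 1" and half_plane: "\<And>v. 0 \<le> Re (\<omega> * sq_sum (cvec v v* h))"
  shows "cmod ((h ** h)$i$j) \<le> crown_const CARD('n)"
proof -
  define last where "last = Max (UNIV :: 'n set)"
  have h_last: "h$last$j = axis last 1 $ j" for j
  proof -
    have "j \<le> last"
      by (simp add: last_def)
    then show ?thesis
      using h h_diag by (cases "j = last") (auto simp: axis_def upper_triangular_def)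
  qed
  have cvec_axis: "cvec (axis last 1) = axis last 1"
    by (simp add: cvec_def axis_def vec_eq_iff)
  have "cvec (axis last 1) v* h = axis last 1"
    unfolding cvec_axis by (simp add: vec_eq_iff axis_vector_matrix_mult h_last)
  then have "0 \<le> Re \<omega>"
    using half_plane[of "axis last 1"] by (simp add: sq_sum_axis)
  define \<zeta> where "\<zeta> = csqrt \<omega>"
  have \<zeta>: "\<zeta>^2 = \<omega>" "cmod \<zeta> = 1" "0 < Re \<zeta>"
    using \<open>0 \<le> Re \<omega>\<close> \<open>cmod \<omega> = 1\<close> Re_csqrt_pos[of \<omega>] by (auto simp: \<zeta>_def)
  define M where "M = (\<chi> i j. \<zeta> * h$i$j)"
  have "((\<chi> i j. cnj (M$i$j)) ** M)$i$j = (cnj \<zeta> * \<zeta>) * ((\<chi> i j. cnj (h$i$j)) ** h)$i$j" for i j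
    by (simp add: M_def matrix_matrix_mult_def sum_distrib_left mult_ac)
  moreover have "cnj \<zeta> * \<zeta> = 1"
    using \<zeta>(2) by (simp add: complex_norm_square[symmetric] mult.commute)
  ultimately have "(\<chi> i j. cnj (M$i$j)) ** M = mat 1"
    by (simp add: conj vec_eq_iff)
  moreover have "upper_triangular M" "\<And>i. M$i$i = \<zeta>"
    using h h_diag by (simp_all add: M_def upper_triangular_def)
  moreover have "sq_sum (v v* (\<chi> i j. Im (M$i$j))) \<le> sq_sum (v v* (\<chi> i j. Re (M$i$j)))" for v
  proof -
    have "cvec v v* M = (\<chi> j. \<zeta> * (cvec v v* h)$j)"
      by (simp add: M_def vector_matrix_mult_def vec_eq_iff sum_distrib_left mult_ac)
    then have "\<omega> * sq_sum (cvec v v* h) = sq_sum (cvec v v* M)"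
      by (simp add: \<zeta>(1)[symmetric] sq_sum_def sum_distrib_left power_mult_distrib)
    moreover have "(\<chi> j. Re ((cvec v v* M)$j)) = v v* (\<chi> i j. Re (M$i$j))"
      and "(\<chi> j. Im ((cvec v v* M)$j)) = v v* (\<chi> i j. Im (M$i$j))"
      by (simp_all add: vector_matrix_mult_def cvec_def vec_eq_iff)
    ultimately show ?thesis
      using half_plane[of v] by (simp add: Re_sq_sum)
  qed
  ultimately have "cmod ((M ** M)$i$j) \<le> crown_const CARD('n)"
    by (rule square_bound_of_domination[OF _ _ _ \<zeta>(3)])
  moreover have "(M ** M)$i$j = \<zeta>^2 * (h ** h)$i$j"
    by (simp add: M_def matrix_matrix_mult_def sum_distrib_left power2_eq_square mult_ac)
  ultimately show ?thesis
    using \<zeta>(2) by (simp add: norm_mult norm_power)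
qed

lemma crown_bound:
  fixes X :: "real^'n::{finite,linorder}^'n::{finite,linorder}"
  assumes X: "strict_upper_triangular X" and crown: "in_crown (nil_exp \<i> (cmat X))"
  shows "cmod (nil_exp (2 * \<i>) (cmat X) $ i $ j) \<le> crown_const CARD('n)"
proof -
  have R: "strict_upper_triangular (cmat X)"
    using X by (simp add: strict_upper_triangular_def cmat_def)
  have h: "upper_triangular (nil_exp \<i> (cmat X))" "\<And>i. nil_exp \<i> (cmat X) $ i $ i = 1"
    using nil_exp_lower[OF R] by (auto simp: upper_triangular_def mat_def)
  have conj: "(\<chi> i j. cnj (nil_exp \<i> (cmat X) $ i $ j)) ** nil_exp \<i> (cmat X) = mat 1"
    by (simp add: cnj_nil_exp nil_exp_add[OF R] nil_exp_0 vec_lambda_eta)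
  obtain \<omega> where "cmod \<omega> = 1" "\<And>v. 0 \<le> Re (\<omega> * sq_sum (cvec v v* nil_exp \<i> (cmat X)))"
    using in_crown_half_plane[OF crown] by blast
  moreover have "nil_exp \<i> (cmat X) ** nil_exp \<i> (cmat X) = nil_exp (2 * \<i>) (cmat X)"
    using nil_exp_add[OF R, of \<i> \<i>] by simp
  ultimately show ?thesis
    using half_plane_square_bound[OF h conj] by metis
qed

section \<open>Bounding X\<close>

text \<open>A bound on |X$i$j| valid whenever the window {i..j} has at most d elements.\<close>
primrec gap_bound :: "nat \<Rightarrow> real \<Rightarrow> nat \<Rightarrow> real" where
  "gap_bound N C 0 = 0"
| "gap_bound N C (Suc d) = (C + (\<Sum>k<N. (2 * N * gap_bound N C d)^k)) / 2"

lemma gap_bound_nonneg: "0 \<le> C \<Longrightarrow> 0 \<le> gap_bound N C d"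
  by (induction d) (simp_all add: sum_nonneg)

lemma entry_le_gap_bound:
  fixes X :: "real^'n::{finite,linorder}^'n::{finite,linorder}"
  assumes X: "strict_upper_triangular X"
    and exp_le: "\<And>i j. cmod (nil_exp (2 * \<i>) (cmat X) $ i $ j) \<le> C"
  shows "card {i..j} \<le> d \<Longrightarrow> \<bar>X$i$j\<bar> \<le> gap_bound CARD('n) C d"
proof (induction d arbitrary: i j)
  case 0
  then have "{i..j} = {}"
    by simp
  then have "j < i"
    by (simp add: not_le)
  then show ?case
    using X by (simp add: strict_upper_triangular_def)
next
  case (Suc d)
  have "0 \<le> C"
    using exp_le[of i j] norm_ge_zero order.trans by blast
  show ?case
  proof (cases "i < j")
    case False
    then show ?thesis
      using X gap_bound_nonneg[OF \<open>0 \<le> C\<close>]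
      by (simp add: strict_upper_triangular_def not_less del: gap_bound.simps)
  next
    case True
    have R: "strict_upper_triangular (cmat X)"
      using X by (simp add: strict_upper_triangular_def cmat_def)
    have "cmod (cmat X $ a $ b) \<le> gap_bound CARD('n) C d"
      if "i \<le> a" "b \<le> j" "(a, b) \<noteq> (i, j)" for a b
    proof -
      have "{a..b} \<subset> {i..j}"
        using that True by (auto simp: subset_eq)
      then have "card {a..b} \<le> d"
        using psubset_card_mono[of "{i..j}" "{a..b}"] Suc.prems by simp
      then show ?thesis
        using Suc.IH by (simp add: cmat_def)
    qed
    from norm_corner_entry_le[OF R gap_bound_nonneg[OF \<open>0 \<le> C\<close>] True this, of "2 * \<i>"]
    have "2 * \<bar>X$i$j\<bar> \<le> C + (\<Sum>k<CARD('n). (2 * CARD('n) * gap_bound CARD('n) C d)^k)"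
      using exp_le[of i j] by (simp add: cmat_def norm_mult)
    then show ?thesis
      by simp
  qed
qed

lemma bounded_if_entries_le:
  fixes S :: "(real^'n^'m) set"
  assumes "\<And>X i j. X \<in> S \<Longrightarrow> \<bar>X$i$j\<bar> \<le> K"
  shows "bounded S"
proof -
  have "norm X \<le> CARD('m) * (CARD('n) * K)" if "X \<in> S" for X
  proof -
    have "norm (X$i) \<le> CARD('n) * K" for i
      using norm_le_l1_cart[of "X$i"] sum_mono[of UNIV "\<lambda>j. \<bar>X$i$j\<bar>" "\<lambda>_. K"] assms[OF that]
      by simp
    moreover have "norm X \<le> (\<Sum>i\<in>UNIV. norm (X$i))"
      by (simp add: norm_vec_def L2_set_le_sum)
    ultimately show ?thesis
      using sum_mono[of UNIV "\<lambda>i. norm (X$i)" "\<lambda>_. CARD('n) * K"] by simp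
  qed
  then show ?thesis
    unfolding bounded_iff by blast
qed

theorem mainTheorem3:
  shows "bounded (Lambda :: (real^('n::{finite,linorder})^('n::{finite,linorder})) set)"
proof (rule bounded_if_entries_le)
  let ?N = "CARD('n::{finite,linorder})"
  fix X :: "real^'n::{finite,linorder}^'n::{finite,linorder}" and i j :: 'n
  assume "X \<in> Lambda"
  then have "X \<in> nilp_alg" "in_crown (mexp (imat X))"
    using connected_component_subset unfolding Lambda_def by blast+
  then have X: "strict_upper_triangular X" and crown: "in_crown (nil_exp \<i> (cmat X))"
    by (simp_all add: nilp_alg_def strict_upper_triangular_def mexp_imat_strict_upper)
  have "\<And>i j. cmod (nil_exp (2 * \<i>) (cmat X) $ i $ j) \<le> crown_const ?N"
    by (rule crown_bound[OF X crown])
  moreover have "card {i..j} \<le> ?N"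
    by (rule card_mono) auto
  ultimately show "\<bar>X$i$j\<bar> \<le> gap_bound ?N (crown_const ?N) ?N"
    using entry_le_gap_bound[OF X] by blast
qed

end
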